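(* Let $\mathcal{L}$ be a family of balanced algebraic laws over a signature $\Sigma$. Then the geometry monoid $\mathcal{G}(\mathcal{L})$ is an inverse monoid.
   Context: Terms $T_\Sigma(V)$ over an infinite set $V$ of variables; an algebraic law $l=r$ is balanced if the same variables occur in $l$ and $r$. Addresses are finite sequences of positive integers, $t/\alpha$ the subterm of $t$ at address $\alpha$. For an oriented law $L=(l,r)$ and an address $\alpha$, the partial operator $O^{+}_{L,\alpha}$ maps $t$ to $t'$ iff $t/\alpha=l\sigma$ for some substitution $\sigma$ and $t'$ is obtained from $t$ by replacing the $\alpha$-th subterm by $r\sigma$; $O^{-}_{L,\alpha}$ is its inverse partial map. Operators act on the right and $f\bullet g$ means "$f$ then $g$". The geometry monoid $\mathcal{G}(\mathcal{L})$ is the monoid of partial maps generated by all $O^{\pm}_{L,\alpha}$ under $\bullet$ (it may contain the empty map). *)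

theory Defs
  imports "HOL-Algebra.Group"
begin

datatype ('f, 'v) trm = Var 'v | Fun 'f "('f, 'v) trm list"

text \<open>A signature is a set of pairs (function symbol, arity).
  T_Sigma(V) is the set of well-formed terms.\<close>
fun wf_trm :: "('f \<times> nat) set \<Rightarrow> ('f, 'v) trm \<Rightarrow> bool" where
  "wf_trm \<Sigma> (Var x) = True"
| "wf_trm \<Sigma> (Fun f ts) = ((f, length ts) \<in> \<Sigma> \<and> (\<forall>t\<in>set ts. wf_trm \<Sigma> t))"

fun vars_trm :: "('f, 'v) trm \<Rightarrow> 'v set" where
  "vars_trm (Var x) = {x}"
| "vars_trm (Fun f ts) = (\<Union>t\<in>set ts. vars_trm t)"

fun subst_apply :: "('f, 'v) trm \<Rightarrow> ('v \<Rightarrow> ('f, 'v) trm) \<Rightarrow> ('f, 'v) trm" where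
  "subst_apply (Var x) \<sigma> = \<sigma> x"
| "subst_apply (Fun f ts) \<sigma> = Fun f (map (\<lambda>t. subst_apply t \<sigma>) ts)"

definition balanced :: "('f, 'v) trm \<times> ('f, 'v) trm \<Rightarrow> bool" where
  "balanced L = (vars_trm (fst L) = vars_trm (snd L))"

text \<open>Addresses are lists of positive integers; index i selects the i-th argument (1-based).\<close>
fun subterm_at :: "('f, 'v) trm \<Rightarrow> nat list \<Rightarrow> ('f, 'v) trm option" where
  "subterm_at t [] = Some t"
| "subterm_at (Var x) (i # \<alpha>) = None"
| "subterm_at (Fun f ts) (i # \<alpha>) =
     (if 1 \<le> i \<and> i \<le> length ts then subterm_at (ts ! (i - 1)) \<alpha> else None)"

fun replace_at :: "('f, 'v) trm \<Rightarrow> nat list \<Rightarrow> ('f, 'v) trm \<Rightarrow> ('f, 'v) trm" where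
  "replace_at t [] s = s"
| "replace_at (Var x) (i # \<alpha>) s = Var x"
| "replace_at (Fun f ts) (i # \<alpha>) s =
     (if 1 \<le> i \<and> i \<le> length ts
      then Fun f (ts[i - 1 := replace_at (ts ! (i - 1)) \<alpha> s]) else Fun f ts)"

type_synonym 'a pmap = "'a \<Rightarrow> 'a option"

text \<open>Composition acting on the right: f \<bullet> g means "f then g".\<close>
definition pcomp :: "'a pmap \<Rightarrow> 'a pmap \<Rightarrow> 'a pmap" (infixl "\<bullet>" 70) where
  "f \<bullet> g = (\<lambda>t. Option.bind (f t) g)"

definition pid :: "('f \<times> nat) set \<Rightarrow> ('f, 'v) trm pmap" where
  "pid \<Sigma> = (\<lambda>t. if wf_trm \<Sigma> t then Some t else None)"

definition pinv :: "'a pmap \<Rightarrow> 'a pmap" where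
  "pinv f = (\<lambda>t'. if \<exists>t. f t = Some t' then Some (SOME t. f t = Some t') else None)"

definition Oplus :: "('f \<times> nat) set \<Rightarrow> ('f, 'v) trm \<times> ('f, 'v) trm \<Rightarrow> nat list \<Rightarrow> ('f, 'v) trm pmap" where
  "Oplus \<Sigma> L \<alpha> = (\<lambda>t.
     if wf_trm \<Sigma> t \<and> (\<exists>\<sigma>. subterm_at t \<alpha> = Some (subst_apply (fst L) \<sigma>))
     then Some (replace_at t \<alpha>
            (subst_apply (snd L) (SOME \<sigma>. subterm_at t \<alpha> = Some (subst_apply (fst L) \<sigma>))))
     else None)"

definition Ominus :: "('f \<times> nat) set \<Rightarrow> ('f, 'v) trm \<times> ('f, 'v) trm \<Rightarrow> nat list \<Rightarrow> ('f, 'v) trm pmap" where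
  "Ominus \<Sigma> L \<alpha> = pinv (Oplus \<Sigma> L \<alpha>)"

inductive_set geom :: "('f \<times> nat) set \<Rightarrow> (('f, 'v) trm \<times> ('f, 'v) trm) set \<Rightarrow> ('f, 'v) trm pmap set"
  for \<Sigma> \<LL> where
  geom_id: "pid \<Sigma> \<in> geom \<Sigma> \<LL>"
| geom_plus: "L \<in> \<LL> \<Longrightarrow> (\<forall>i\<in>set \<alpha>. 0 < i) \<Longrightarrow> Oplus \<Sigma> L \<alpha> \<in> geom \<Sigma> \<LL>"
| geom_minus: "L \<in> \<LL> \<Longrightarrow> (\<forall>i\<in>set \<alpha>. 0 < i) \<Longrightarrow> Ominus \<Sigma> L \<alpha> \<in> geom \<Sigma> \<LL>"
| geom_comp: "f \<in> geom \<Sigma> \<LL> \<Longrightarrow> g \<in> geom \<Sigma> \<LL> \<Longrightarrow> f \<bullet> g \<in> geom \<Sigma> \<LL>"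

definition geom_monoid :: "('f \<times> nat) set \<Rightarrow> (('f, 'v) trm \<times> ('f, 'v) trm) set \<Rightarrow> ('f, 'v) trm pmap monoid" where
  "geom_monoid \<Sigma> \<LL> = \<lparr>carrier = geom \<Sigma> \<LL>, mult = (\<bullet>), one = pid \<Sigma>\<rparr>"

definition inverse_monoid :: "('a, 'b) monoid_scheme \<Rightarrow> bool" where
  "inverse_monoid M \<longleftrightarrow> monoid M \<and>
     (\<forall>x\<in>carrier M. \<exists>!y. y \<in> carrier M \<and> x \<otimes>\<^bsub>M\<^esub> y \<otimes>\<^bsub>M\<^esub> x = x \<and> y \<otimes>\<^bsub>M\<^esub> x \<otimes>\<^bsub>M\<^esub> y = y)"

end

theory Submission
  imports Defs
begin

text \<open>For a balanced law L = (l, r), a substitution \<sigma> is determined on the common variables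
  of l and r by either of l\<sigma> and r\<sigma>. Hence from the image t' of t under the operator
  O+ for L at \<alpha> one reads off r\<sigma> = t'/\<alpha>, hence l\<sigma>, and recovers t by putting l\<sigma> back
  at \<alpha>: every generator is a partial injection of T(V). Partial injections are closed
  under composition and converse, and the converse of O+ is O- and vice versa, so the
  geometry monoid is a submonoid of the symmetric inverse monoid closed under converse.
  There the converse of f is the unique y with f y f = f and y f y = y.\<close>

lemma subterm_at_replace_at:
  "subterm_at t \<alpha> = Some s \<Longrightarrow> subterm_at (replace_at t \<alpha> u) \<alpha> = Some u"
  by (induction t \<alpha> rule: subterm_at.induct) (auto split: if_splits)

lemma replace_at_replace_at:
  "subterm_at t \<alpha> = Some s \<Longrightarrow> replace_at (replace_at t \<alpha> u) \<alpha> v = replace_at t \<alpha> v"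
  by (induction t \<alpha> rule: subterm_at.induct) (auto split: if_splits)

lemma replace_at_subterm_at:
  "subterm_at t \<alpha> = Some s \<Longrightarrow> replace_at t \<alpha> s = t"
  by (induction t \<alpha> rule: subterm_at.induct) (auto split: if_splits)

lemma wf_trm_subterm_at:
  "subterm_at t \<alpha> = Some s \<Longrightarrow> wf_trm \<Sigma> t \<Longrightarrow> wf_trm \<Sigma> s"
  by (induction t \<alpha> rule: subterm_at.induct) (auto split: if_splits)

lemma wf_trm_replace_at:
  "subterm_at t \<alpha> = Some s \<Longrightarrow> wf_trm \<Sigma> t \<Longrightarrow> wf_trm \<Sigma> u \<Longrightarrow> wf_trm \<Sigma> (replace_at t \<alpha> u)"
  by (induction t \<alpha> rule: subterm_at.induct)
    (auto split: if_splits dest!: set_update_subset_insert[THEN subsetD])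

lemma wf_trm_subst_apply_var:
  "wf_trm \<Sigma> (subst_apply t \<sigma>) \<Longrightarrow> x \<in> vars_trm t \<Longrightarrow> wf_trm \<Sigma> (\<sigma> x)"
  by (induction t) auto

lemma wf_trm_subst_apply:
  "wf_trm \<Sigma> t \<Longrightarrow> (\<And>x. x \<in> vars_trm t \<Longrightarrow> wf_trm \<Sigma> (\<sigma> x)) \<Longrightarrow> wf_trm \<Sigma> (subst_apply t \<sigma>)"
  by (induction t) auto

lemma subst_apply_eq_iff:
  "subst_apply t \<sigma> = subst_apply t \<tau> \<longleftrightarrow> (\<forall>x\<in>vars_trm t. \<sigma> x = \<tau> x)"
  by (induction t) (auto simp: map_eq_conv)

lemma balanced_subst_apply_eq_iff:
  assumes "balanced L"
  shows "subst_apply (snd L) \<sigma> = subst_apply (snd L) \<tau> \<longleftrightarrow>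
    subst_apply (fst L) \<sigma> = subst_apply (fst L) \<tau>"
  using assms by (simp add: balanced_def subst_apply_eq_iff)

definition pinj :: "'a pmap \<Rightarrow> bool" where
  "pinj f \<longleftrightarrow> (\<forall>t1 t2 u. f t1 = Some u \<longrightarrow> f t2 = Some u \<longrightarrow> t1 = t2)"

definition wf_pmap :: "('f \<times> nat) set \<Rightarrow> ('f, 'v) trm pmap \<Rightarrow> bool" where
  "wf_pmap \<Sigma> f \<longleftrightarrow> (\<forall>t t'. f t = Some t' \<longrightarrow> wf_trm \<Sigma> t \<and> wf_trm \<Sigma> t')"

lemma pmap_eqI: "(\<And>t u. f t = Some u \<longleftrightarrow> g t = Some u) \<Longrightarrow> f = g"
  by (rule ext) (metis option.exhaust)

lemma pcomp_Some_iff: "(f \<bullet> g) t = Some u \<longleftrightarrow> (\<exists>s. f t = Some s \<and> g s = Some u)"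
  unfolding pcomp_def by (cases "f t") auto

lemma pcomp_assoc: "(f \<bullet> g) \<bullet> h = f \<bullet> (g \<bullet> h)"
  by (rule pmap_eqI) (auto simp: pcomp_Some_iff)

lemma pinv_SomeD: "pinv f t' = Some t \<Longrightarrow> f t = Some t'"
  unfolding pinv_def by (auto split: if_splits intro: someI)

lemma pinv_Some_iff: "pinj f \<Longrightarrow> pinv f t' = Some t \<longleftrightarrow> f t = Some t'"
  unfolding pinj_def pinv_def by (auto intro: someI)

lemma pinj_pinv: "pinj (pinv f)"
  unfolding pinj_def by (metis pinv_SomeD option.inject)

lemma pinv_pinv: "pinj f \<Longrightarrow> pinv (pinv f) = f"
  by (rule pmap_eqI) (simp add: pinv_Some_iff pinj_pinv)

lemma pinj_pcomp: "pinj f \<Longrightarrow> pinj g \<Longrightarrow> pinj (f \<bullet> g)"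
  unfolding pinj_def pcomp_Some_iff by metis

lemma pinv_pcomp: "pinj f \<Longrightarrow> pinj g \<Longrightarrow> pinv (f \<bullet> g) = pinv g \<bullet> pinv f"
  by (rule pmap_eqI) (auto simp: pinv_Some_iff pinj_pcomp pcomp_Some_iff)

lemma pcomp_pinv_pcomp: "pinj f \<Longrightarrow> f \<bullet> pinv f \<bullet> f = f"
  by (rule pmap_eqI) (auto simp: pcomp_Some_iff pinv_Some_iff)

lemma pinv_pcomp_pinv: "pinj f \<Longrightarrow> pinv f \<bullet> f \<bullet> pinv f = pinv f"
  by (rule pmap_eqI) (auto simp: pcomp_Some_iff pinv_Some_iff)

lemma pinv_unique:
  assumes f: "pinj f" and g: "pinj g" and fgf: "f \<bullet> g \<bullet> f = f" and gfg: "g \<bullet> f \<bullet> g = g"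
  shows "g = pinv f"
proof (rule pmap_eqI)
  fix t u
  show "g t = Some u \<longleftrightarrow> pinv f t = Some u"
  proof
    assume gt: "g t = Some u"
    then have "(g \<bullet> f \<bullet> g) t = Some u" using gfg by simp
    then obtain a b where "g t = Some a" "f a = Some b" "g b = Some u"
      by (auto simp: pcomp_Some_iff)
    with gt g have "b = t" unfolding pinj_def by metis
    with \<open>f a = Some b\<close> \<open>g t = Some a\<close> gt show "pinv f t = Some u"
      by (simp add: pinv_Some_iff[OF f])
  next
    assume "pinv f t = Some u"
    then have fu: "f u = Some t" by (rule pinv_SomeD)
    then have "(f \<bullet> g \<bullet> f) u = Some t" using fgf by simp
    then obtain a b where "f u = Some a" "g a = Some b" "f b = Some t"
      by (auto simp: pcomp_Some_iff)
    with fu f have "a = t" "b = u" unfolding pinj_def by (metis option.inject)+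
    with \<open>g a = Some b\<close> show "g t = Some u" by simp
  qed
qed

lemma wf_pmap_pinv: "wf_pmap \<Sigma> f \<Longrightarrow> wf_pmap \<Sigma> (pinv f)"
  unfolding wf_pmap_def by (blast dest: pinv_SomeD)

lemma wf_pmap_pcomp: "wf_pmap \<Sigma> f \<Longrightarrow> wf_pmap \<Sigma> g \<Longrightarrow> wf_pmap \<Sigma> (f \<bullet> g)"
  unfolding wf_pmap_def pcomp_Some_iff by blast

lemma wf_pmap_pid: "wf_pmap \<Sigma> (pid \<Sigma>)"
  unfolding wf_pmap_def pid_def by auto

lemma pinj_pid: "pinj (pid \<Sigma>)"
  unfolding pinj_def pid_def by (auto split: if_splits)

lemma pid_pcomp: "wf_pmap \<Sigma> f \<Longrightarrow> pid \<Sigma> \<bullet> f = f"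
  by (rule pmap_eqI) (auto simp: pcomp_Some_iff pid_def wf_pmap_def)

lemma pcomp_pid: "wf_pmap \<Sigma> f \<Longrightarrow> f \<bullet> pid \<Sigma> = f"
  by (rule pmap_eqI) (auto simp: pcomp_Some_iff pid_def wf_pmap_def)

lemma pinv_pid: "pinv (pid \<Sigma>) = pid \<Sigma>"
  by (rule pinv_unique[symmetric]) (auto simp: pinj_pid pid_pcomp wf_pmap_pid)

lemma inverse_monoid_pinv_closed:
  assumes pid: "pid \<Sigma> \<in> M"
    and pcomp: "\<And>f g. f \<in> M \<Longrightarrow> g \<in> M \<Longrightarrow> f \<bullet> g \<in> M"
    and pinv: "\<And>f. f \<in> M \<Longrightarrow> pinv f \<in> M"
    and pinj: "\<And>f. f \<in> M \<Longrightarrow> pinj f"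
    and wf: "\<And>f. f \<in> M \<Longrightarrow> wf_pmap \<Sigma> f"
  shows "inverse_monoid \<lparr>carrier = M, mult = (\<bullet>), one = pid \<Sigma>\<rparr>"
proof -
  have "monoid \<lparr>carrier = M, mult = (\<bullet>), one = pid \<Sigma>\<rparr>"
    by (rule monoidI) (auto simp: pid pcomp pcomp_assoc pid_pcomp pcomp_pid wf)
  moreover have "\<exists>!g. g \<in> M \<and> f \<bullet> g \<bullet> f = f \<and> g \<bullet> f \<bullet> g = g" if f: "f \<in> M" for f
  proof (rule ex1I[of _ "pinv f"])
    show "pinv f \<in> M \<and> f \<bullet> pinv f \<bullet> f = f \<and> pinv f \<bullet> f \<bullet> pinv f = pinv f"
      using f pinv pinj pcomp_pinv_pcomp pinv_pcomp_pinv by blast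
    show "g = pinv f" if "g \<in> M \<and> f \<bullet> g \<bullet> f = f \<and> g \<bullet> f \<bullet> g = g" for g
      using that f pinj pinv_unique by blast
  qed
  ultimately show ?thesis
    unfolding inverse_monoid_def by simp
qed

lemma Oplus_Some_iff:
  assumes "balanced L"
  shows "Oplus \<Sigma> L \<alpha> t = Some t' \<longleftrightarrow> wf_trm \<Sigma> t \<and>
    (\<exists>\<sigma>. subterm_at t \<alpha> = Some (subst_apply (fst L) \<sigma>) \<and> t' = replace_at t \<alpha> (subst_apply (snd L) \<sigma>))"
proof -
  let ?match = "\<lambda>\<sigma>. subterm_at t \<alpha> = Some (subst_apply (fst L) \<sigma>)"
  have choice: "subst_apply (snd L) (SOME \<sigma>. ?match \<sigma>) = subst_apply (snd L) \<sigma>" if "?match \<sigma>" for \<sigma>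
    using someI[of ?match, OF that] that balanced_subst_apply_eq_iff[OF assms] by simp
  show ?thesis
  proof
    assume "Oplus \<Sigma> L \<alpha> t = Some t'"
    then have "wf_trm \<Sigma> t" and "Ex ?match"
      and "t' = replace_at t \<alpha> (subst_apply (snd L) (SOME \<sigma>. ?match \<sigma>))"
      unfolding Oplus_def by (auto split: if_splits)
    moreover from \<open>Ex ?match\<close> have "?match (SOME \<sigma>. ?match \<sigma>)"
      by (rule someI_ex)
    ultimately show "wf_trm \<Sigma> t \<and> (\<exists>\<sigma>. ?match \<sigma> \<and> t' = replace_at t \<alpha> (subst_apply (snd L) \<sigma>))"
      by blast
  next
    assume "wf_trm \<Sigma> t \<and> (\<exists>\<sigma>. ?match \<sigma> \<and> t' = replace_at t \<alpha> (subst_apply (snd L) \<sigma>))"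
    then obtain \<sigma> where "wf_trm \<Sigma> t" "?match \<sigma>" "t' = replace_at t \<alpha> (subst_apply (snd L) \<sigma>)"
      by blast
    moreover from this have "Oplus \<Sigma> L \<alpha> t = Some (replace_at t \<alpha> (subst_apply (snd L) (SOME \<sigma>. ?match \<sigma>)))"
      unfolding Oplus_def by (intro if_P) blast
    ultimately show "Oplus \<Sigma> L \<alpha> t = Some t'"
      using choice by simp
  qed
qed

lemma pinj_Oplus:
  assumes bal: "balanced L"
  shows "pinj (Oplus \<Sigma> L \<alpha>)"
  unfolding pinj_def
proof (intro allI impI)
  fix t1 t2 u assume "Oplus \<Sigma> L \<alpha> t1 = Some u" "Oplus \<Sigma> L \<alpha> t2 = Some u"
  then obtain \<sigma>1 \<sigma>2
    where s1: "subterm_at t1 \<alpha> = Some (subst_apply (fst L) \<sigma>1)"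
      and u1: "u = replace_at t1 \<alpha> (subst_apply (snd L) \<sigma>1)"
      and s2: "subterm_at t2 \<alpha> = Some (subst_apply (fst L) \<sigma>2)"
      and u2: "u = replace_at t2 \<alpha> (subst_apply (snd L) \<sigma>2)"
    unfolding Oplus_Some_iff[OF bal] by blast
  have "Some (subst_apply (snd L) \<sigma>1) = Some (subst_apply (snd L) \<sigma>2)"
    using subterm_at_replace_at[OF s1] subterm_at_replace_at[OF s2] u1 u2 by metis
  then have "subst_apply (fst L) \<sigma>1 = subst_apply (fst L) \<sigma>2"
    using balanced_subst_apply_eq_iff[OF bal] by simp
  moreover have "t1 = replace_at u \<alpha> (subst_apply (fst L) \<sigma>1)"
    using u1 replace_at_replace_at[OF s1] replace_at_subterm_at[OF s1] by simp
  moreover have "t2 = replace_at u \<alpha> (subst_apply (fst L) \<sigma>2)"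
    using u2 replace_at_replace_at[OF s2] replace_at_subterm_at[OF s2] by simp
  ultimately show "t1 = t2" by simp
qed

lemma wf_pmap_Oplus:
  assumes wf: "wf_trm \<Sigma> (snd L)" and bal: "balanced L"
  shows "wf_pmap \<Sigma> (Oplus \<Sigma> L \<alpha>)"
  unfolding wf_pmap_def
proof (intro allI impI)
  fix t t' assume "Oplus \<Sigma> L \<alpha> t = Some t'"
  then obtain \<sigma> where t: "wf_trm \<Sigma> t" and s: "subterm_at t \<alpha> = Some (subst_apply (fst L) \<sigma>)"
    and t': "t' = replace_at t \<alpha> (subst_apply (snd L) \<sigma>)"
    unfolding Oplus_Some_iff[OF bal] by blast
  have "wf_trm \<Sigma> (subst_apply (fst L) \<sigma>)"
    using wf_trm_subterm_at[OF s t] .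
  then have "wf_trm \<Sigma> (subst_apply (snd L) \<sigma>)"
    using bal wf by (auto simp: balanced_def intro: wf_trm_subst_apply wf_trm_subst_apply_var)
  then show "wf_trm \<Sigma> t \<and> wf_trm \<Sigma> t'"
    using t t' wf_trm_replace_at[OF s t] by blast
qed

context
  fixes \<Sigma> :: "('f \<times> nat) set" and \<LL> :: "(('f, 'v) trm \<times> ('f, 'v) trm) set"
  assumes wf_laws: "\<forall>L\<in>\<LL>. wf_trm \<Sigma> (snd L)"
    and balanced_laws: "\<forall>L\<in>\<LL>. balanced L"
begin

lemma geom_pinj_wf_pmap: "f \<in> geom \<Sigma> \<LL> \<Longrightarrow> pinj f \<and> wf_pmap \<Sigma> f"
  by (induction rule: geom.induct)
    (auto simp: Ominus_def pinj_pid wf_pmap_pid pinj_pinv wf_pmap_pinv pinj_pcomp wf_pmap_pcomp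
      pinj_Oplus wf_pmap_Oplus wf_laws balanced_laws)

lemma pinv_geom: "f \<in> geom \<Sigma> \<LL> \<Longrightarrow> pinv f \<in> geom \<Sigma> \<LL>"
proof (induction rule: geom.induct)
  case geom_id
  show ?case using geom.geom_id pinv_pid by metis
next
  case (geom_plus L \<alpha>)
  then show ?case by (simp add: Ominus_def[symmetric] geom.geom_minus)
next
  case (geom_minus L \<alpha>)
  then show ?case
    by (simp add: Ominus_def pinv_pinv pinj_Oplus balanced_laws geom.geom_plus)
next
  case (geom_comp f g)
  then show ?case
    by (simp add: pinv_pcomp geom_pinj_wf_pmap geom.geom_comp)
qed

end

theorem proposition1p8:
  fixes \<Sigma> :: "('f \<times> nat) set" and \<LL> :: "(('f, 'v) trm \<times> ('f, 'v) trm) set"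
  assumes "infinite (UNIV :: 'v set)"
    and "\<forall>L\<in>\<LL>. wf_trm \<Sigma> (fst L) \<and> wf_trm \<Sigma> (snd L)"
    and "\<forall>L\<in>\<LL>. balanced L"
  shows "inverse_monoid (geom_monoid \<Sigma> \<LL>)"
proof -
  have wf_laws: "\<forall>L\<in>\<LL>. wf_trm \<Sigma> (snd L)"
    using assms(2) by blast
  show ?thesis
    unfolding geom_monoid_def
    using geom.geom_id geom.geom_comp pinv_geom[OF wf_laws assms(3)]
      geom_pinj_wf_pmap[OF wf_laws assms(3)]
    by (intro inverse_monoid_pinv_closed) auto
qed

end
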